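(* Let $n\ge2$ and let $\Sigma=\mathbb{R}^n\subset\mathbb{R}^{n+1}$ be a hyperplane through the origin, $r=|\vec x|$. Define $$f_1(r)=-1+\sum_{m=1}^\infty\frac{m\,(2m-2)!}{2^{3m-1}(m!)^2\prod_{j=0}^{m-1}(n+2j)}\,r^{2m},$$ which has a unique positive root $r_1$. Then $f_1$ satisfies $Lf_1=0$ on $\Sigma$ and is a positive Jacobi function on $\{r>r_1\}$, but $f_1$ is not an eigenfunction on $\{r>r_1\}$; indeed $\int_{\{r>r_1\}}f_1^2e^{-r^2/4}\,d\mu=\infty$.
   Context: Stability operator on a self-shrinker: $Lf=\Delta f-\tfrac12\langle\vec x,\nabla f\rangle+(|A|^2+\tfrac12)f$ (on a hyperplane $|A|^2=0$). A Jacobi function is a function $u$ with $Lu=0$. An eigenfunction on a region $\Omega$ is a $u\not\equiv0$ in $L^2(\Omega,e^{-|\vec x|^2/4}d\mu)$ with $Lu=-\lambda u$ for some constant $\lambda$. *)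

theory Defs
  imports "HOL-Analysis.Analysis"
begin

text \<open>Sigma = R^n, the hyperplane through the origin (so |A|^2 = 0), modelled by real^'n.
  Partial derivatives are directional derivatives along coordinate axes.\<close>

definition partial :: "'n::finite \<Rightarrow> (real^'n \<Rightarrow> real) \<Rightarrow> real^'n \<Rightarrow> real" where
  "partial i f x = deriv (\<lambda>t. f (x + t *\<^sub>R axis i 1)) 0"

definition laplacian :: "(real^'n::finite \<Rightarrow> real) \<Rightarrow> real^'n \<Rightarrow> real" where
  "laplacian f x = (\<Sum>i\<in>UNIV. deriv (\<lambda>t. partial i f (x + t *\<^sub>R axis i 1)) 0)"

text \<open>Stability operator on the hyperplane: L f = Delta f - 1/2 <x, grad f> + (|A|^2 + 1/2) f, |A|^2 = 0.\<close>
definition stabL :: "(real^'n::finite \<Rightarrow> real) \<Rightarrow> real^'n \<Rightarrow> real" where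
  "stabL f x = laplacian f x - 1/2 * (\<Sum>i\<in>UNIV. x $ i * partial i f x) + 1/2 * f x"

definition twice_partially_differentiable :: "(real^'n::finite \<Rightarrow> real) \<Rightarrow> bool" where
  "twice_partially_differentiable f \<longleftrightarrow>
     (\<forall>x i. (\<lambda>t. f (x + t *\<^sub>R axis i 1)) differentiable (at 0) \<and>
            (\<lambda>t. partial i f (x + t *\<^sub>R axis i 1)) differentiable (at 0))"

definition gauss_L2sq :: "(real^'n::finite) set \<Rightarrow> (real^'n \<Rightarrow> real) \<Rightarrow> ennreal" where
  "gauss_L2sq \<Omega> u = (\<integral>\<^sup>+ x. indicator \<Omega> x * ennreal ((u x)\<^sup>2 * exp (- (norm x)\<^sup>2 / 4)) \<partial>lborel)"

definition jacobi_on :: "(real^'n::finite) set \<Rightarrow> (real^'n \<Rightarrow> real) \<Rightarrow> bool" where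
  "jacobi_on \<Omega> u \<longleftrightarrow> (\<forall>x\<in>\<Omega>. stabL u x = 0)"

definition eigenfunction_on :: "(real^'n::finite) set \<Rightarrow> (real^'n \<Rightarrow> real) \<Rightarrow> bool" where
  "eigenfunction_on \<Omega> u \<longleftrightarrow>
     (\<exists>x\<in>\<Omega>. u x \<noteq> 0) \<and> u \<in> borel_measurable lborel \<and> gauss_L2sq \<Omega> u < \<infinity> \<and>
     (\<exists>lam::real. \<forall>x\<in>\<Omega>. stabL u x = - lam * u x)"

definition f1coeff :: "nat \<Rightarrow> nat \<Rightarrow> real" where
  "f1coeff n m = real m * fact (2*m - 2) /
     (2 ^ (3*m - 1) * (fact m)\<^sup>2 * (\<Prod>j<m. real n + 2 * real j))"

definition f1 :: "nat \<Rightarrow> real \<Rightarrow> real" where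
  "f1 n r = -1 + (\<Sum>k. f1coeff n (Suc k) * r ^ (2 * Suc k))"

end

theory Submission
  imports Defs
begin

text \<open>Write \<open>f\<^sub>1(r) = h(r\<^sup>2)\<close>. With the constant term \<open>-1\<close> adjoined, the coefficients
  \<open>a\<^sub>m\<close> of \<open>h\<close> satisfy \<open>4(m+1)(2m+n) a\<^sub>m\<^sub>+\<^sub>1 = (2m-1) a\<^sub>m\<close>, which is the power-series
  form of \<open>4 s h'' + (2n - s) h' + h/2 = 0\<close>, the equation \<open>L f = 0\<close> for radial \<open>f\<close>.
  All \<open>a\<^sub>m\<close> with \<open>m \<ge> 1\<close> are positive, so \<open>h\<close> increases strictly from \<open>h(0) = -1\<close>:
  this gives the unique positive root and the positivity of \<open>f\<^sub>1\<close> beyond it. The recursion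
  also makes \<open>a\<^sub>m m! 8\<^sup>m\<close> nondecreasing for \<open>m > n\<close>, so \<open>h(s)\<close> grows at least like
  \<open>exp(s/8)\<close>; then \<open>f\<^sub>1(r)\<^sup>2 exp(-r\<^sup>2/4)\<close> stays bounded below as \<open>r \<rightarrow> \<infinity>\<close>, and the
  Gaussian \<open>L\<^sup>2\<close> norm over the exterior of any ball is infinite.\<close>

lemma f1coeff_pos: "n \<ge> 1 \<Longrightarrow> m \<ge> 1 \<Longrightarrow> f1coeff n m > 0"
  unfolding f1coeff_def by (intro divide_pos_pos mult_pos_pos prod_pos) auto

definition f1_coeffs :: "nat \<Rightarrow> nat \<Rightarrow> real" where
  "f1_coeffs n m = (if m = 0 then -1 else f1coeff n m)"

lemma f1_coeffs_pos: "n \<ge> 1 \<Longrightarrow> m \<ge> 1 \<Longrightarrow> f1_coeffs n m > 0"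
  by (simp add: f1_coeffs_def f1coeff_pos)

lemma f1coeff_Suc_Suc:
  assumes "n \<ge> 1"
  shows "f1coeff n (Suc (Suc m)) * (4 * (real m + 2) * (2 * real m + 2 + real n))
           = (2 * real m + 1) * f1coeff n (Suc m)"
proof -
  have e: "2 * Suc (Suc m) - 2 = Suc (Suc (2 * m))" "2 * Suc m - 2 = 2 * m"
          "3 * Suc (Suc m) - 1 = (3 * m + 2) + 3" "3 * Suc m - 1 = 3 * m + 2"
          "real (Suc (Suc m)) = real m + 2" "real (Suc m) = real m + 1" by auto
  have prod: "(\<Prod>j<Suc (Suc m). real n + 2 * real j)
                = (\<Prod>j<Suc m. real n + 2 * real j) * (real n + 2 * real m + 2)"
    by (simp add: algebra_simps)
  have facts: "fact (Suc (Suc (2 * m))) = (2 * real m + 2) * (2 * real m + 1) * (fact (2 * m) :: real)"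
              "(fact (Suc (Suc m)) :: real) = (real m + 2) * (real m + 1) * fact m"
              "(fact (Suc m) :: real) = (real m + 1) * fact m"
    by (simp_all add: algebra_simps)
  have "(\<Prod>j<Suc m. real n + 2 * real j) > 0" using assms by (intro prod_pos) auto
  moreover have "(fact m :: real) > 0" by simp
  ultimately show ?thesis
    unfolding f1coeff_def e prod facts power_add using assms
    by (simp add: divide_simps power2_eq_square) (simp add: algebra_simps)
qed

lemma f1_coeffs_rec:
  assumes "n \<ge> 1"
  shows "f1_coeffs n (Suc m) * (4 * (real m + 1) * (2 * real m + real n))
           = (2 * real m - 1) * f1_coeffs n m"
proof (cases m)
  case 0
  then show ?thesis using assms by (simp add: f1_coeffs_def f1coeff_def)
next
  case (Suc k)
  then show ?thesis
    using f1coeff_Suc_Suc[OF assms, of k] by (simp add: f1_coeffs_def algebra_simps)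
qed

lemma f1_coeffs_Suc:
  assumes "n \<ge> 1"
  shows "f1_coeffs n (Suc m) = (2 * real m - 1) / (4 * (real m + 1) * (2 * real m + real n)) * f1_coeffs n m"
proof -
  have "4 * (real m + 1) * (2 * real m + real n) > 0" using assms by auto
  then show ?thesis using f1_coeffs_rec[OF assms, of m] by (simp add: field_simps)
qed

lemma abs_f1_coeffs_le: "n \<ge> 1 \<Longrightarrow> \<bar>f1_coeffs n m\<bar> \<le> 1 / fact m"
proof (induction m)
  case 0
  then show ?case by (simp add: f1_coeffs_def)
next
  case (Suc m)
  have D: "4 * (real m + 1) * (2 * real m + real n) > 0" using Suc.prems by auto
  have "\<bar>2 * real m - 1\<bar> \<le> 4 * (2 * real m + real n)" using Suc.prems by simp
  then have "(real m + 1) * \<bar>2 * real m - 1\<bar> \<le> (real m + 1) * (4 * (2 * real m + real n))"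
    by (rule mult_left_mono) simp
  then have ratio: "\<bar>(2 * real m - 1) / (4 * (real m + 1) * (2 * real m + real n))\<bar> \<le> 1 / (real m + 1)"
    using D by (simp add: abs_divide divide_simps algebra_simps)
  have "\<bar>f1_coeffs n (Suc m)\<bar> \<le> 1 / (real m + 1) * (1 / fact m)"
    unfolding f1_coeffs_Suc[OF Suc.prems] abs_mult
    using Suc ratio by (intro mult_mono) auto
  then show ?case by (simp add: field_simps)
qed

lemma summable_f1_coeffs: "n \<ge> 1 \<Longrightarrow> summable (\<lambda>m. f1_coeffs n m * s ^ m)"
proof (rule summable_comparison_test[OF _ summable_exp[of "\<bar>s\<bar>"]], intro exI allI impI)
  fix m assume "n \<ge> 1"
  then show "norm (f1_coeffs n m * s ^ m) \<le> inverse (fact m) * \<bar>s\<bar> ^ m"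
    using abs_f1_coeffs_le[of n m]
    by (auto simp: abs_mult power_abs divide_inverse intro!: mult_right_mono)
qed

definition f1_profile :: "nat \<Rightarrow> real \<Rightarrow> real" where
  "f1_profile n s = (\<Sum>m. f1_coeffs n m * s ^ m)"

definition f1_profile' :: "nat \<Rightarrow> real \<Rightarrow> real" where
  "f1_profile' n s = (\<Sum>m. diffs (f1_coeffs n) m * s ^ m)"

definition f1_profile'' :: "nat \<Rightarrow> real \<Rightarrow> real" where
  "f1_profile'' n s = (\<Sum>m. diffs (diffs (f1_coeffs n)) m * s ^ m)"

lemma summable_diffs_f1_coeffs:
  assumes "n \<ge> 1"
  shows "summable (\<lambda>m. diffs (f1_coeffs n) m * s ^ m)"
    and "summable (\<lambda>m. diffs (diffs (f1_coeffs n)) m * s ^ m)"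
  using termdiff_converges_all[OF summable_f1_coeffs[OF assms]]
    termdiff_converges_all[OF termdiff_converges_all[OF summable_f1_coeffs[OF assms]]] by auto

lemma f1_profile_has_real_derivative:
  "n \<ge> 1 \<Longrightarrow> (f1_profile n has_real_derivative f1_profile' n s) (at s)"
  unfolding f1_profile_def f1_profile'_def
  by (rule termdiffs_strong_converges_everywhere[OF summable_f1_coeffs])

lemma f1_profile'_has_real_derivative:
  "n \<ge> 1 \<Longrightarrow> (f1_profile' n has_real_derivative f1_profile'' n s) (at s)"
  unfolding f1_profile'_def f1_profile''_def
  by (rule termdiffs_strong_converges_everywhere[OF summable_diffs_f1_coeffs(1)])

lemma sums_mult_diffs:
  fixes c :: "nat \<Rightarrow> real"
  assumes "\<And>y. summable (\<lambda>m. c m * y ^ m)"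
  shows "(\<lambda>m. real m * c m * s ^ m) sums (s * (\<Sum>m. diffs c m * s ^ m))"
proof -
  have "(\<lambda>m. s * (diffs c m * s ^ m)) sums (s * (\<Sum>m. diffs c m * s ^ m))"
    using termdiff_converges_all[OF assms] by (intro sums_mult summable_sums)
  then have "(\<lambda>m. real (Suc m) * c (Suc m) * s ^ Suc m) sums (s * (\<Sum>m. diffs c m * s ^ m))"
    by (simp add: diffs_def algebra_simps)
  then show ?thesis
    using sums_Suc_iff[where f = "\<lambda>m. real m * c m * s ^ m"] by simp
qed

lemma f1_profile_ode:
  assumes "n \<ge> 1"
  shows "4 * s * f1_profile'' n s + (2 * real n - s) * f1_profile' n s + f1_profile n s / 2 = 0"
proof -
  let ?c = "f1_coeffs n"
  have h: "(\<lambda>m. ?c m * s ^ m) sums f1_profile n s"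
    unfolding f1_profile_def by (intro summable_sums summable_f1_coeffs assms)
  have h': "(\<lambda>m. diffs ?c m * s ^ m) sums f1_profile' n s"
    unfolding f1_profile'_def by (intro summable_sums summable_diffs_f1_coeffs assms)
  have sh'': "(\<lambda>m. real m * diffs ?c m * s ^ m) sums (s * f1_profile'' n s)"
    unfolding f1_profile''_def by (intro sums_mult_diffs summable_diffs_f1_coeffs assms)
  have sh': "(\<lambda>m. real m * ?c m * s ^ m) sums (s * f1_profile' n s)"
    unfolding f1_profile'_def by (intro sums_mult_diffs summable_f1_coeffs assms)
  have "(\<lambda>m. 4 * (real m * diffs ?c m * s ^ m) + 2 * real n * (diffs ?c m * s ^ m)
          - real m * ?c m * s ^ m + ?c m * s ^ m / 2)
        sums (4 * (s * f1_profile'' n s) + 2 * real n * f1_profile' n s - s * f1_profile' n s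
              + f1_profile n s / 2)"
    by (intro sums_add sums_diff sums_mult sums_divide h h' sh'' sh')
  moreover have "4 * (real m * diffs ?c m * s ^ m) + 2 * real n * (diffs ?c m * s ^ m)
          - real m * ?c m * s ^ m + ?c m * s ^ m / 2 = 0" for m
  proof -
    have "4 * (real m * diffs ?c m * s ^ m) + 2 * real n * (diffs ?c m * s ^ m)
            - real m * ?c m * s ^ m + ?c m * s ^ m / 2
          = s ^ m / 2 * (?c (Suc m) * (4 * (real m + 1) * (2 * real m + real n))
                         - (2 * real m - 1) * ?c m)"
      by (simp add: diffs_def algebra_simps)
    then show ?thesis using f1_coeffs_rec[OF assms, of m] by simp
  qed
  ultimately have "4 * (s * f1_profile'' n s) + 2 * real n * f1_profile' n s - s * f1_profile' n s
                     + f1_profile n s / 2 = 0"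
    by (simp add: sums_0 sums_unique2)
  then show ?thesis by (simp add: algebra_simps)
qed

lemma f1_series_term:
  "f1coeff n (Suc k) * r ^ (2 * Suc k) = f1_coeffs n (Suc k) * (r\<^sup>2) ^ Suc k"
  by (simp only: f1_coeffs_def power_mult) simp

lemma f1_eq_f1_profile: "n \<ge> 1 \<Longrightarrow> f1 n r = f1_profile n (r\<^sup>2)"
  unfolding f1_def f1_series_term
  using suminf_split_head[OF summable_f1_coeffs, of n "r\<^sup>2"]
  by (simp add: f1_profile_def f1_coeffs_def)

lemma summable_f1_series:
  "n \<ge> 1 \<Longrightarrow> summable (\<lambda>k. f1coeff n (Suc k) * r ^ (2 * Suc k))"
  unfolding f1_series_term
  using summable_Suc_iff[where f = "\<lambda>k. f1_coeffs n k * (r\<^sup>2) ^ k"] summable_f1_coeffs[of n "r\<^sup>2"]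
  by simp

lemma f1_profile_strict_mono:
  assumes "n \<ge> 1" "0 \<le> s" "s < t"
  shows "f1_profile n s < f1_profile n t"
proof -
  have "0 < (\<Sum>m. f1_coeffs n m * t ^ m - f1_coeffs n m * s ^ m)"
  proof (rule suminf_pos2[where i = 1])
    show "summable (\<lambda>m. f1_coeffs n m * t ^ m - f1_coeffs n m * s ^ m)"
      by (intro summable_diff summable_f1_coeffs assms(1))
    show "0 \<le> f1_coeffs n m * t ^ m - f1_coeffs n m * s ^ m" for m
      using f1_coeffs_pos[OF assms(1), of m] power_mono[of s t m] assms
      by (cases "m = 0") (auto intro: mult_left_mono)
    show "0 < f1_coeffs n 1 * t ^ 1 - f1_coeffs n 1 * s ^ 1"
      using f1_coeffs_pos[OF assms(1), of 1] assms by simp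
  qed
  also have "\<dots> = f1_profile n t - f1_profile n s"
    unfolding f1_profile_def by (intro suminf_diff[symmetric] summable_f1_coeffs assms(1))
  finally show ?thesis by simp
qed

lemma f1_profile_0: "f1_profile n 0 = -1"
  by (simp add: f1_profile_def f1_coeffs_def)

lemma f1_profile_ge_term:
  assumes "n \<ge> 1" "s \<ge> 0" "m \<ge> 1"
  shows "f1_profile n s \<ge> f1_coeffs n m * s ^ m - 1"
proof -
  have "0 \<le> f1_coeffs n k * s ^ k" if "k \<noteq> 0" for k
    using f1_coeffs_pos[OF assms(1), of k] that assms(2) by simp
  then have "(\<Sum>k\<in>{0, m}. f1_coeffs n k * s ^ k) \<le> f1_profile n s"
    unfolding f1_profile_def by (intro sum_le_suminf summable_f1_coeffs assms(1)) auto
  then show ?thesis using assms by (simp add: f1_coeffs_def)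
qed

lemma f1_strict_mono:
  assumes "n \<ge> 1" "0 \<le> r" "r < r'"
  shows "f1 n r < f1 n r'"
  using f1_profile_strict_mono[OF assms(1), of "r\<^sup>2" "r'\<^sup>2"] power_strict_mono[of r r' 2] assms
  by (simp add: f1_eq_f1_profile)

lemma ex1_f1_root:
  assumes "n \<ge> 1"
  shows "\<exists>!r1. r1 > 0 \<and> f1 n r1 = 0"
proof -
  have "f1_profile n (4 * real n) \<ge> 0"
    using f1_profile_ge_term[OF assms, of "4 * real n" 1] assms
    by (simp add: f1_coeffs_def f1coeff_def)
  then obtain s where s: "0 \<le> s" "f1_profile n s = 0"
    using IVT[of "f1_profile n" 0 0 "4 * real n"] f1_profile_0
      DERIV_isCont[OF f1_profile_has_real_derivative[OF assms]] by auto
  moreover have "s \<noteq> 0" using s f1_profile_0[of n] by auto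
  ultimately have root: "sqrt s > 0 \<and> f1 n (sqrt s) = 0"
    by (auto simp: f1_eq_f1_profile[OF assms])
  show ?thesis
  proof (rule ex1I[of _ "sqrt s"])
    show "r = sqrt s" if "r > 0 \<and> f1 n r = 0" for r
      using f1_strict_mono[OF assms, of r "sqrt s"] f1_strict_mono[OF assms, of "sqrt s" r] root that
      by (cases r "sqrt s" rule: linorder_cases) auto
  qed (rule root)
qed

lemma inner_add_axis_self:
  fixes y :: "real^'n"
  shows "(y + t *\<^sub>R axis i 1) \<bullet> (y + t *\<^sub>R axis i 1) = y \<bullet> y + 2 * t * y $ i + t\<^sup>2"
  by (simp add: inner_add_left inner_add_right inner_axis inner_axis' inner_commute
      power2_eq_square algebra_simps)

lemma radial_along_axis_has_real_derivative:
  fixes y :: "real^'n"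
  assumes "\<And>s. (h has_real_derivative h' s) (at s)"
  shows "((\<lambda>t. h ((y + t *\<^sub>R axis i 1) \<bullet> (y + t *\<^sub>R axis i 1))) has_real_derivative
           h' (y \<bullet> y + 2 * t * y $ i + t\<^sup>2) * (2 * y $ i + 2 * t)) (at t)"
  unfolding inner_add_axis_self
  by (rule DERIV_chain2[OF assms]) (auto intro!: derivative_eq_intros)

lemma partial_radial:
  fixes y :: "real^'n"
  assumes "\<And>s. (h has_real_derivative h' s) (at s)"
  shows "partial i (\<lambda>x. h (x \<bullet> x)) y = 2 * y $ i * h' (y \<bullet> y)"
  unfolding partial_def
  using DERIV_imp_deriv[OF radial_along_axis_has_real_derivative[OF assms, of y i 0]] by simp

lemma partial_radial_along_axis_has_real_derivative:
  fixes y :: "real^'n"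
  assumes "\<And>s. (h has_real_derivative h' s) (at s)" "\<And>s. (h' has_real_derivative h'' s) (at s)"
  shows "((\<lambda>t. partial i (\<lambda>x. h (x \<bullet> x)) (y + t *\<^sub>R axis i 1)) has_real_derivative
           2 * h' (y \<bullet> y + 2 * t * y $ i + t\<^sup>2)
           + 2 * (y $ i + t) * h'' (y \<bullet> y + 2 * t * y $ i + t\<^sup>2) * (2 * y $ i + 2 * t)) (at t)"
proof -
  have eq: "(\<lambda>t. partial i (\<lambda>x. h (x \<bullet> x)) (y + t *\<^sub>R axis i 1))
          = (\<lambda>t. 2 * (y $ i + t) * h' ((y + t *\<^sub>R axis i 1) \<bullet> (y + t *\<^sub>R axis i 1)))"
    by (simp add: partial_radial[OF assms(1)])
  have "((\<lambda>t. 2 * (y $ i + t)) has_real_derivative 2) (at t)"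
    by (auto intro!: derivative_eq_intros)
  from DERIV_mult[OF this radial_along_axis_has_real_derivative[OF assms(2), of y i t]]
  show ?thesis
    unfolding eq by (rule DERIV_cong) (simp only: inner_add_axis_self, simp add: algebra_simps)
qed

lemma twice_partially_differentiable_radial:
  assumes "\<And>s. (h has_real_derivative h' s) (at s)" "\<And>s. (h' has_real_derivative h'' s) (at s)"
  shows "twice_partially_differentiable (\<lambda>x::real^'n. h (x \<bullet> x))"
  unfolding twice_partially_differentiable_def real_differentiable_def
  using radial_along_axis_has_real_derivative[OF assms(1)]
    partial_radial_along_axis_has_real_derivative[OF assms] by blast

lemma stabL_radial:
  fixes y :: "real^'n"
  assumes "\<And>s. (h has_real_derivative h' s) (at s)" "\<And>s. (h' has_real_derivative h'' s) (at s)"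
  defines "s \<equiv> y \<bullet> y"
  shows "stabL (\<lambda>x. h (x \<bullet> x)) y = 4 * s * h'' s + (2 * real CARD('n) - s) * h' s + h s / 2"
proof -
  have "laplacian (\<lambda>x. h (x \<bullet> x)) y = (\<Sum>i\<in>UNIV. 2 * h' s + 4 * (y $ i * y $ i) * h'' s)"
    unfolding laplacian_def s_def
    using DERIV_imp_deriv[OF partial_radial_along_axis_has_real_derivative[OF assms(1,2), where y = y and t = 0]]
    by (simp add: algebra_simps)
  also have "\<dots> = 4 * s * h'' s + 2 * real CARD('n) * h' s"
    by (simp add: s_def inner_vec_def sum.distrib sum_distrib_left algebra_simps)
  finally show ?thesis
    unfolding stabL_def partial_radial[OF assms(1)]
    by (simp add: s_def inner_vec_def sum_distrib_left sum_distrib_right algebra_simps)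
qed

lemma f1_coeffs_growth:
  assumes n: "n \<ge> 1" and m: "m \<ge> n + 1"
  shows "f1_coeffs n (n + 1) * fact (n + 1) * 8 ^ (n + 1) \<le> f1_coeffs n m * fact m * 8 ^ m"
  using m
proof (induction m rule: dec_induct)
  case (step m)
  have ratio: "1 \<le> 2 * (2 * real m - 1) / (2 * real m + real n)"
    using step n by (simp add: divide_simps)
  have "(2 * real m - 1) / (4 * (real m + 1) * (2 * real m + real n)) * ((real m + 1) * 8)
          = 2 * (2 * real m - 1) / (2 * real m + real n)"
    using n by (simp add: divide_simps) (simp add: algebra_simps)
  moreover have "f1_coeffs n (Suc m) * fact (Suc m) * 8 ^ Suc m
      = (f1_coeffs n m * fact m * 8 ^ m)
        * ((2 * real m - 1) / (4 * (real m + 1) * (2 * real m + real n)) * ((real m + 1) * 8))"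
    unfolding f1_coeffs_Suc[OF n] by (simp add: mult_ac) (simp add: algebra_simps)
  ultimately have "f1_coeffs n (Suc m) * fact (Suc m) * 8 ^ Suc m
          = (f1_coeffs n m * fact m * 8 ^ m) * (2 * (2 * real m - 1) / (2 * real m + real n))"
    by simp
  moreover have "f1_coeffs n m * fact m * 8 ^ m > 0"
    using f1_coeffs_pos[OF n, of m] step by simp
  ultimately have "f1_coeffs n m * fact m * 8 ^ m \<le> f1_coeffs n (Suc m) * fact (Suc m) * 8 ^ Suc m"
    using mult_left_mono[OF ratio] by fastforce
  with step.IH show ?case by linarith
qed simp

lemma f1_profile_ge_exp:
  assumes n: "n \<ge> 1" and s: "s \<ge> 0"
  defines "D \<equiv> f1_coeffs n (n + 1) * fact (n + 1) * 8 ^ (n + 1)"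
  shows "D * (exp (s / 8) - (\<Sum>m<n + 1. (s / 8) ^ m / fact m)) - 1 \<le> f1_profile n s"
proof -
  \<comment> \<open>\<open>D\<close> times the tail from \<open>m = n + 1\<close> of the series of \<open>exp(s/8)\<close>, plus the constant \<open>-1\<close>:
      termwise below the series of \<open>f1_profile n s\<close>\<close>
  define c where
    "c m = D * ((s / 8) ^ m / fact m)
           - (if m \<in> {..<n + 1} then D * ((s / 8) ^ m / fact m) else 0)
           - (if m = 0 then 1 else 0)" for m
  have "(\<lambda>m. u ^ m / fact m) sums exp u" for u :: real
    using exp_converges[of u] by (simp add: divide_inverse_commute)
  then have "(\<lambda>m. D * ((s / 8) ^ m / fact m)) sums (D * exp (s / 8))"
    by (rule sums_mult)
  then have c_sums: "c sums (D * exp (s / 8) - D * (\<Sum>m<n + 1. (s / 8) ^ m / fact m) - 1)"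
    unfolding c_def sum_distrib_left
    by (intro sums_diff sums_If_finite_set finite_lessThan sums_single[of 0 "\<lambda>_. 1"])
  have c_le: "c m \<le> f1_coeffs n m * s ^ m" for m
  proof (cases "m < n + 1")
    case True
    then show ?thesis
      using f1_coeffs_pos[OF n, of m] s by (cases "m = 0") (auto simp: c_def f1_coeffs_def)
  next
    case False
    have "D * ((s / 8) ^ m / fact m) \<le> (f1_coeffs n m * fact m * 8 ^ m) * ((s / 8) ^ m / fact m)"
      unfolding D_def using f1_coeffs_growth[OF n, of m] False s by (intro mult_right_mono) auto
    also have "\<dots> = f1_coeffs n m * s ^ m" by (simp add: power_divide)
    finally show ?thesis using False by (simp add: c_def)
  qed
  show ?thesis
    using sums_le[OF c_le c_sums summable_sums[OF summable_f1_coeffs[OF n]]]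
    unfolding f1_profile_def right_diff_distrib .
qed

lemma f1_profile_sq_gauss_eventually_ge:
  assumes n: "n \<ge> 1"
  shows "\<exists>\<delta>>0. eventually (\<lambda>s. \<delta> \<le> (f1_profile n s)\<^sup>2 * exp (- s / 4)) at_top"
proof -
  define D where "D = f1_coeffs n (n + 1) * fact (n + 1) * 8 ^ (n + 1)"
  define P where "P s = (\<Sum>m<n + 1. (s / 8) ^ m / fact m)" for s :: real
  have D: "D > 0" unfolding D_def using f1_coeffs_pos[OF n, of "n + 1"] by simp
  have lim8: "filterlim (\<lambda>s::real. s / 8) at_top at_top"
    using filterlim_tendsto_pos_mult_at_top[OF tendsto_const[of "1 / 8"] _ filterlim_ident] by simp
  have "((\<lambda>s::real. (s / 8) ^ m / exp (s / 8) / fact m) \<longlongrightarrow> 0) at_top" for m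
    using filterlim_compose[OF tendsto_power_div_exp_0 lim8] by (intro tendsto_divide_zero) auto
  then have "((\<lambda>s. P s / exp (s / 8)) \<longlongrightarrow> 0) at_top"
    unfolding P_def sum_divide_distrib by (intro tendsto_null_sum) (simp add: field_simps)
  moreover have "((\<lambda>s::real. 1 / exp (s / 8)) \<longlongrightarrow> 0) at_top"
    using filterlim_compose[OF tendsto_power_div_exp_0[of 0] lim8] by simp
  ultimately have "((\<lambda>s. D - D * (P s / exp (s / 8)) - 1 / exp (s / 8)) \<longlongrightarrow> D - D * 0 - 0) at_top"
    by (intro tendsto_intros)
  then have "eventually (\<lambda>s. D / 2 < D - D * (P s / exp (s / 8)) - 1 / exp (s / 8)) at_top"
    using D by (intro order_tendstoD) auto
  then have "eventually (\<lambda>s. D / 2 \<le> f1_profile n s / exp (s / 8)) at_top"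
    using eventually_ge_at_top[of 0]
  proof eventually_elim
    case (elim s)
    have "D - D * (P s / exp (s / 8)) - 1 / exp (s / 8) = (D * (exp (s / 8) - P s) - 1) / exp (s / 8)"
      by (simp add: field_simps)
    also have "\<dots> \<le> f1_profile n s / exp (s / 8)"
      using f1_profile_ge_exp[OF n elim(2)] unfolding D_def P_def by (intro divide_right_mono) auto
    finally show ?case using elim(1) by linarith
  qed
  then have "eventually (\<lambda>s. (D / 2)\<^sup>2 \<le> (f1_profile n s)\<^sup>2 * exp (- s / 4)) at_top"
  proof eventually_elim
    case (elim s)
    have "exp (s / 8) ^ 2 = exp (s / 4)"
      by (simp add: power2_eq_square flip: exp_add)
    then have "exp (- s / 4) = 1 / exp (s / 8) ^ 2"
      by (simp add: exp_minus inverse_eq_divide)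
    moreover have "(D / 2)\<^sup>2 \<le> (f1_profile n s / exp (s / 8))\<^sup>2"
      using elim D by (intro power_mono) auto
    ultimately show ?case by (simp add: power_divide)
  qed
  with D show ?thesis by (intro exI[of _ "(D / 2)\<^sup>2"]) auto
qed

lemma f1_sq_gauss_eventually_ge:
  assumes n: "n \<ge> 1"
  shows "\<exists>\<delta>>0. eventually (\<lambda>r. \<delta> \<le> (f1 n r)\<^sup>2 * exp (- r\<^sup>2 / 4)) at_top"
proof -
  obtain \<delta> where "\<delta> > 0" and ev: "eventually (\<lambda>s. \<delta> \<le> (f1_profile n s)\<^sup>2 * exp (- s / 4)) at_top"
    using f1_profile_sq_gauss_eventually_ge[OF n] by blast
  have "filterlim (\<lambda>r::real. r\<^sup>2) at_top at_top"
    by (intro filterlim_pow_at_top filterlim_ident) simp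
  from eventually_compose_filterlim[OF ev this] \<open>\<delta> > 0\<close> show ?thesis
    by (auto simp: f1_eq_f1_profile[OF n])
qed

lemma emeasure_lborel_outside_ball:
  "emeasure lborel {x::'a::euclidean_space. R < norm x} = \<infinity>"
proof -
  have "{x::'a. R < norm x} = UNIV - cball 0 R" by (auto simp: dist_norm)
  moreover have "emeasure lborel (UNIV - cball (0::'a) R) = \<infinity>"
    using emeasure_lborel_cball_finite[of "0::'a" R] by (subst emeasure_Diff) auto
  ultimately show ?thesis by simp
qed

lemma gauss_L2sq_radial_eq_infinity:
  fixes u :: "real \<Rightarrow> real"
  assumes "\<delta> > 0" and "eventually (\<lambda>r. \<delta> \<le> (u r)\<^sup>2 * exp (- r\<^sup>2 / 4)) at_top"
  shows "gauss_L2sq {x::real^'n. r1 < norm x} (\<lambda>x. u (norm x)) = \<infinity>"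
proof -
  obtain R where R: "\<And>r. r \<ge> R \<Longrightarrow> \<delta> \<le> (u r)\<^sup>2 * exp (- r\<^sup>2 / 4) \<and> r1 \<le> r"
    using eventually_conj[OF assms(2) eventually_ge_at_top[of r1]]
    unfolding eventually_at_top_linorder by blast
  have "open {x::real^'n. R < norm x}"
    by (intro open_Collect_less continuous_intros)
  then have meas: "{x::real^'n. R < norm x} \<in> sets lborel" by simp
  have "\<infinity> = (\<integral>\<^sup>+ x. ennreal \<delta> * indicator {x::real^'n. R < norm x} x \<partial>lborel)"
    using assms(1) by (simp add: nn_integral_cmult_indicator[OF meas] emeasure_lborel_outside_ball ennreal_mult_top)
  also have "\<dots> \<le> gauss_L2sq {x::real^'n. r1 < norm x} (\<lambda>x. u (norm x))"
    unfolding gauss_L2sq_def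
  proof (intro nn_integral_mono)
    fix x :: "real^'n"
    show "ennreal \<delta> * indicator {x. R < norm x} x
          \<le> indicator {x. r1 < norm x} x * ennreal ((u (norm x))\<^sup>2 * exp (- (norm x)\<^sup>2 / 4))"
      using R[of "norm x"] R[of R] by (cases "R < norm x") (auto simp: indicator_def intro: ennreal_leI)
  qed
  finally show ?thesis by (simp add: top_unique)
qed

theorem lemma4p14:
  fixes F :: "real^'n \<Rightarrow> real"
  assumes n2: "CARD('n) \<ge> 2"
    and F_def: "F = (\<lambda>x. f1 CARD('n) (norm x))"
  shows "(\<forall>r. summable (\<lambda>k. f1coeff CARD('n) (Suc k) * r ^ (2 * Suc k)))
       \<and> (\<exists>!r1. r1 > 0 \<and> f1 CARD('n) r1 = 0)
       \<and> twice_partially_differentiable F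
       \<and> (\<forall>x. stabL F x = 0)
       \<and> (\<forall>r1. r1 > 0 \<and> f1 CARD('n) r1 = 0 \<longrightarrow>
             jacobi_on {x. norm x > r1} F
           \<and> (\<forall>x. norm x > r1 \<longrightarrow> F x > 0)
           \<and> \<not> eigenfunction_on {x. norm x > r1} F
           \<and> gauss_L2sq {x. norm x > r1} F = \<infinity>)"
proof -
  let ?N = "CARD('n)"
  have N: "?N \<ge> 1" using n2 by simp
  have F_radial: "F = (\<lambda>x. f1_profile ?N (x \<bullet> x))"
    unfolding F_def by (simp add: f1_eq_f1_profile[OF N] power2_norm_eq_inner)
  note h' = f1_profile_has_real_derivative[OF N] and h'' = f1_profile'_has_real_derivative[OF N]
  have jacobi: "stabL F x = 0" for x
    unfolding F_radial stabL_radial[OF h' h''] using f1_profile_ode[OF N] by simp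
  obtain \<delta> where "\<delta> > 0" "eventually (\<lambda>r. \<delta> \<le> (f1 ?N r)\<^sup>2 * exp (- r\<^sup>2 / 4)) at_top"
    using f1_sq_gauss_eventually_ge[OF N] by blast
  then have gauss: "gauss_L2sq {x. norm x > r1} F = \<infinity>" for r1
    unfolding F_def by (rule gauss_L2sq_radial_eq_infinity)
  have pos: "F x > 0" if "r1 > 0" "f1 ?N r1 = 0" "norm x > r1" for r1 x
    using f1_strict_mono[OF N, of r1 "norm x"] that unfolding F_def by simp
  have "twice_partially_differentiable F"
    unfolding F_radial by (rule twice_partially_differentiable_radial[OF h' h''])
  then show ?thesis
    using summable_f1_series[OF N] ex1_f1_root[OF N] jacobi gauss pos
    unfolding jacobi_on_def eigenfunction_on_def by simp blast
qed

end
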